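(* Let $k$ be an odd integer with $k\ge 5$, let $D$ be a strong $k$-quasi-transitive digraph with $\mathrm{diam}(D)\ge k+2$, let $u,v\in V(D)$ with $d(u,v)=k+2$, and let $P=x_0x_1\ldots x_{k+2}$ be a shortest $(u,v)$-path. Let $I=\{x\in V(D)\setminus V(P): x\Rightarrow V(P)\}$ and $W=\{x\in V(D)\setminus V(P): V(P)\Rightarrow x\}$. If $D[V(P)]$ is a semicomplete digraph, then $x\mapsto V(P)$ for every $x\in I$ and $V(P)\mapsto y$ for every $y\in W$.
   Context: All digraphs are finite, without loops or multiple arcs (opposite arcs allowed). $x\rightarrow y$ means $xy\in A(D)$; $x,y$ are adjacent if $x\rightarrow y$ or $y\rightarrow x$. For disjoint vertex sets $X,Y$ (singletons identified with vertices): $X\rightarrow Y$ means every vertex of $X$ dominates every vertex of $Y$; $X\Rightarrow Y$ means there is no arc from $Y$ to $X$; $X\mapsto Y$ means both $X\rightarrow Y$ and $X\Rightarrow Y$. For $k\ge 2$, $D$ is $k$-quasi-transitive if for every path $x_0x_1\ldots x_k$ of length $k$, $x_0$ and $x_k$ are adjacent. $d(x,y)$ is the length of a shortest $(x,y)$-path, $\mathrm{diam}(D)=\max_{x,y}d(x,y)$. $D[S]$ is the induced subdigraph; a semicomplete digraph is one in which every two distinct vertices are adjacent. *)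

theory Defs
  imports Main
begin

definition digraph :: "'a set \<Rightarrow> ('a \<times> 'a) set \<Rightarrow> bool" where
  "digraph V A \<longleftrightarrow> finite V \<and> A \<subseteq> V \<times> V \<and> (\<forall>x. (x, x) \<notin> A)"

text \<open>A path is a nonempty list of distinct vertices, consecutive ones joined by arcs.
  Its length is the number of arcs, i.e. length of the list minus one.\<close>
definition is_path :: "'a set \<Rightarrow> ('a \<times> 'a) set \<Rightarrow> 'a list \<Rightarrow> bool" where
  "is_path V A p \<longleftrightarrow> p \<noteq> [] \<and> set p \<subseteq> V \<and> distinct p \<and>
     (\<forall>i. Suc i < length p \<longrightarrow> (p ! i, p ! Suc i) \<in> A)"

definition adjacent :: "('a \<times> 'a) set \<Rightarrow> 'a \<Rightarrow> 'a \<Rightarrow> bool" where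
  "adjacent A x y \<longleftrightarrow> (x, y) \<in> A \<or> (y, x) \<in> A"

definition k_quasi_transitive :: "nat \<Rightarrow> 'a set \<Rightarrow> ('a \<times> 'a) set \<Rightarrow> bool" where
  "k_quasi_transitive k V A \<longleftrightarrow>
     (\<forall>p. is_path V A p \<and> length p = k + 1 \<longrightarrow> adjacent A (hd p) (last p))"

definition strong :: "'a set \<Rightarrow> ('a \<times> 'a) set \<Rightarrow> bool" where
  "strong V A \<longleftrightarrow> (\<forall>x\<in>V. \<forall>y\<in>V. \<exists>p. is_path V A p \<and> hd p = x \<and> last p = y)"

definition dist :: "'a set \<Rightarrow> ('a \<times> 'a) set \<Rightarrow> 'a \<Rightarrow> 'a \<Rightarrow> nat" where
  "dist V A x y = (LEAST n. \<exists>p. is_path V A p \<and> hd p = x \<and> last p = y \<and> length p = n + 1)"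

definition diam :: "'a set \<Rightarrow> ('a \<times> 'a) set \<Rightarrow> nat" where
  "diam V A = Max {dist V A x y | x y. x \<in> V \<and> y \<in> V}"

definition semicomplete_on :: "('a \<times> 'a) set \<Rightarrow> 'a set \<Rightarrow> bool" where
  "semicomplete_on A S \<longleftrightarrow> (\<forall>x\<in>S. \<forall>y\<in>S. x \<noteq> y \<longrightarrow> adjacent A x y)"

text \<open>X \<rightarrow> Y: every vertex of X dominates every vertex of Y.\<close>
definition dominates :: "('a \<times> 'a) set \<Rightarrow> 'a set \<Rightarrow> 'a set \<Rightarrow> bool" where
  "dominates A X Y \<longleftrightarrow> (\<forall>x\<in>X. \<forall>y\<in>Y. (x, y) \<in> A)"

text \<open>X \<Rightarrow> Y: no arc from Y to X.\<close>
definition no_back_arcs :: "('a \<times> 'a) set \<Rightarrow> 'a set \<Rightarrow> 'a set \<Rightarrow> bool" where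
  "no_back_arcs A X Y \<longleftrightarrow> (\<forall>y\<in>Y. \<forall>x\<in>X. (y, x) \<notin> A)"

text \<open>X \<mapsto> Y: both X \<rightarrow> Y and X \<Rightarrow> Y.\<close>
definition strictly_dominates :: "('a \<times> 'a) set \<Rightarrow> 'a set \<Rightarrow> 'a set \<Rightarrow> bool" where
  "strictly_dominates A X Y \<longleftrightarrow> dominates A X Y \<and> no_back_arcs A X Y"

end

(* The chords of the shortest path P all go backwards, and semicompleteness makes every
   backward chord P_j -> P_i (j >= i + 2) present. So P contains paths with k vertices from P_j
   to P_(j-1), and from P_j to P_(j+k-1); for x with no in-neighbour on P, k-quasi-transitivity
   applied to x followed by such a path carries an arc x -> P_j to P_(j-1) and to P_(j+k-1),
   and from a single out-neighbour on P to all of P.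
   An out-neighbour on P exists: take a shortest path z from P to x. If z is short, a path
   inside P in front of it has k + 1 vertices and ends at x. Otherwise z is induced, so
   z_(a+k) -> z_a, and this moves an out-arc of x down z two steps at a time until it reaches z_0,
   which lies on P, or z_1, from which a detour through z_2 leads back into P.
   The statement about W is the statement about I in the converse digraph. *)

theory Submission
  imports Defs
begin

lemma is_path_iff_successively:
  "is_path V A p \<longleftrightarrow>
     p \<noteq> [] \<and> set p \<subseteq> V \<and> distinct p \<and> successively (\<lambda>x y. (x, y) \<in> A) p"
  by (simp add: is_path_def successively_conv_nth)

lemma is_path_singleton [simp]: "is_path V A [x] \<longleftrightarrow> x \<in> V"
  by (simp add: is_path_def)

lemma is_path_Cons:
  "p \<noteq> [] \<Longrightarrow>
     is_path V A (x # p) \<longleftrightarrow> x \<in> V \<and> x \<notin> set p \<and> (x, hd p) \<in> A \<and> is_path V A p"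
  by (auto simp: is_path_iff_successively successively_Cons)

lemma is_path_append:
  "p \<noteq> [] \<Longrightarrow> q \<noteq> [] \<Longrightarrow>
     is_path V A (p @ q) \<longleftrightarrow>
       is_path V A p \<and> is_path V A q \<and> set p \<inter> set q = {} \<and> (last p, hd q) \<in> A"
  by (auto simp: is_path_iff_successively successively_append_iff)

lemma is_path_converse_rev [simp]: "is_path V (converse A) (rev p) \<longleftrightarrow> is_path V A p"
  by (simp add: is_path_iff_successively)

lemma is_path_drop: "is_path V A p \<Longrightarrow> n < length p \<Longrightarrow> is_path V A (drop n p)"
  unfolding is_path_def by (auto dest: in_set_dropD)

lemma is_path_take: "is_path V A p \<Longrightarrow> 0 < n \<Longrightarrow> is_path V A (take n p)"
  unfolding is_path_def by (auto dest: in_set_takeD)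

lemma successively_upt:
  "(\<And>l. i \<le> l \<Longrightarrow> Suc l < j \<Longrightarrow> R l (Suc l)) \<Longrightarrow> successively R [i..<j]"
  by (auto simp: successively_conv_nth)

lemma is_path_map_nth:
  assumes "is_path V A p" "ns \<noteq> []" "distinct ns" "\<forall>n\<in>set ns. n < length p"
    and "successively (\<lambda>m n. (p ! m, p ! n) \<in> A) ns"
  shows "is_path V A (map ((!) p) ns)"
  using assms by (auto simp: is_path_iff_successively successively_map distinct_map
      intro: inj_on_nth)

lemma is_path_slice:
  assumes "is_path V A p" "i < j" "j \<le> length p"
  shows "is_path V A (map ((!) p) [i..<j])"
proof (rule is_path_map_nth[OF assms(1)])
  show "successively (\<lambda>m n. (p ! m, p ! n) \<in> A) [i..<j]"
    using assms by (intro successively_upt) (auto simp: is_path_def)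
qed (use assms in auto)

lemma k_quasi_transitiveD:
  "k_quasi_transitive k V A \<Longrightarrow> is_path V A p \<Longrightarrow> length p = Suc k \<Longrightarrow>
     adjacent A (hd p) (last p)"
  unfolding k_quasi_transitive_def by simp

lemma kqt_arc_to_end_of_path:
  assumes kqt: "k_quasi_transitive k V A" and path: "is_path V A (x # q)"
    and q: "length q = k" "0 < k" and no_arc: "(last q, x) \<notin> A"
  shows "(x, last q) \<in> A"
proof -
  have "adjacent A (hd (x # q)) (last (x # q))"
    by (rule k_quasi_transitiveD[OF kqt path]) (simp add: q)
  then show ?thesis using q no_arc by (auto simp: adjacent_def)
qed

lemma k_quasi_transitive_converse:
  assumes "k_quasi_transitive k V A"
  shows "k_quasi_transitive k V (converse A)"
  unfolding k_quasi_transitive_def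
proof (intro allI impI)
  fix p assume p: "is_path V (converse A) p \<and> length p = k + 1"
  then have "adjacent A (hd (rev p)) (last (rev p))"
    using k_quasi_transitiveD[OF assms, of "rev p"] is_path_converse_rev[of V A "rev p"] by simp
  then show "adjacent (converse A) (hd p) (last p)"
    using p by (auto simp: adjacent_def is_path_def hd_rev last_rev)
qed

lemma strong_converse:
  assumes "strong V A"
  shows "strong V (converse A)"
  unfolding strong_def
proof (intro ballI)
  fix x y assume "x \<in> V" "y \<in> V"
  then obtain p where p: "is_path V A p" "hd p = y" "last p = x"
    using assms unfolding strong_def by blast
  moreover have "p \<noteq> []" using p by (simp add: is_path_def)
  ultimately show "\<exists>p. is_path V (converse A) p \<and> hd p = x \<and> last p = y"
    by (intro exI[of _ "rev p"]) (simp add: hd_rev last_rev)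
qed

lemma semicomplete_on_converse [simp]:
  "semicomplete_on (converse A) S \<longleftrightarrow> semicomplete_on A S"
  by (auto simp: semicomplete_on_def adjacent_def)

definition forward_chordless :: "('a \<times> 'a) set \<Rightarrow> 'a list \<Rightarrow> bool" where
  "forward_chordless A p \<longleftrightarrow> (\<forall>i j. i + 2 \<le> j \<longrightarrow> j < length p \<longrightarrow> (p ! i, p ! j) \<notin> A)"

lemma forward_chordlessD:
  "forward_chordless A p \<Longrightarrow> i + 2 \<le> j \<Longrightarrow> j < length p \<Longrightarrow> (p ! i, p ! j) \<notin> A"
  unfolding forward_chordless_def by blast

lemma forward_chordless_converse_rev:
  assumes "forward_chordless A p"
  shows "forward_chordless (converse A) (rev p)"
  unfolding forward_chordless_def
proof (intro allI impI)
  fix i j assume ij: "i + 2 \<le> j" "j < length (rev p)"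
  then have "(p ! (length p - Suc j), p ! (length p - Suc i)) \<notin> A"
    using forward_chordlessD[OF assms] by simp
  then show "(rev p ! i, rev p ! j) \<notin> converse A"
    using ij by (simp add: rev_nth)
qed

lemma shortcut_is_path:
  assumes p: "is_path V A p" and ij: "i < j" "j < length p" and arc: "(p ! i, p ! j) \<in> A"
  shows "is_path V A (take (Suc i) p @ drop j p)"
proof -
  have "set (take (Suc i) p) \<inter> set (drop j p) = {}"
    using p ij by (intro set_take_disj_set_drop_if_distinct) (auto simp: is_path_def)
  moreover have "last (take (Suc i) p) = p ! i" "hd (drop j p) = p ! j"
    using ij by (simp_all add: take_Suc_conv_app_nth hd_drop_conv_nth)
  moreover have "take (Suc i) p \<noteq> []" "drop j p \<noteq> []" using ij by auto
  ultimately show ?thesis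
    using p ij arc by (simp add: is_path_append is_path_take is_path_drop)
qed

lemma forward_chordless_if_shortest:
  assumes p: "is_path V A p"
    and shortest: "\<And>q. is_path V A q \<Longrightarrow> hd q = hd p \<Longrightarrow> last q = last p \<Longrightarrow> length p \<le> length q"
  shows "forward_chordless A p"
  unfolding forward_chordless_def
proof (intro allI impI notI)
  fix i j assume ij: "i + 2 \<le> j" "j < length p" and arc: "(p ! i, p ! j) \<in> A"
  let ?q = "take (Suc i) p @ drop j p"
  have "is_path V A ?q" using shortcut_is_path[OF p _ ij(2) arc] ij by simp
  moreover have "hd ?q = hd p" "last ?q = last p" using ij by (cases p; simp)+
  ultimately have "length p \<le> length ?q" by (rule shortest)
  then show False using ij by simp
qed

lemma dist_le_length:
  assumes "is_path V A q"
  shows "dist V A (hd q) (last q) + 1 \<le> length q"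
proof -
  have "length q = (length q - 1) + 1" using assms by (simp add: is_path_def)
  moreover have "dist V A (hd q) (last q) \<le> length q - 1"
    unfolding dist_def using assms calculation by (intro Least_le) blast
  ultimately show ?thesis by linarith
qed

lemma forward_chordless_if_geodesic:
  "is_path V A p \<Longrightarrow> length p = dist V A (hd p) (last p) + 1 \<Longrightarrow> forward_chordless A p"
  by (rule forward_chordless_if_shortest) (use dist_le_length in fastforce)+

lemma kqt_chordless_back_arc:
  assumes kqt: "k_quasi_transitive k V A" and p: "is_path V A p" "forward_chordless A p"
    and k: "2 \<le> k" and a: "a + k < length p"
  shows "(p ! (a + k), p ! a) \<in> A"
proof -
  have "adjacent A (p ! a) (p ! (a + k))"
    using k_quasi_transitiveD[OF kqt is_path_slice[OF p(1), of a "Suc (a + k)"]] a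
    by (simp add: hd_map last_map del: upt_Suc)
  then show ?thesis
    using forward_chordlessD[OF p(2), of a "a + k"] k a by (auto simp: adjacent_def)
qed

lemma kqt_chordless_last_arc_step:
  assumes kqt: "k_quasi_transitive k V A" and p: "is_path V A p" "forward_chordless A p"
    and k: "2 \<le> k" and a: "2 \<le> a" "a + k < length p" and arc: "(last p, p ! a) \<in> A"
  shows "(last p, p ! (a - 2)) \<in> A"
proof -
  define n where "n = length p - 1"
  have n: "length p = Suc n" "last p = p ! n"
    using p(1) unfolding n_def by (auto simp: is_path_def last_conv_nth)
  have back_arc: "(p ! (a + k - 2), p ! (a - 2)) \<in> A"
    using kqt_chordless_back_arc[OF kqt p k, of "a - 2"] a by simp
  let ?ns = "n # [a..<a + k - 1] @ [a - 2]"
  have "is_path V A (map ((!) p) ?ns)"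
  proof (rule is_path_map_nth[OF p(1)])
    show "successively (\<lambda>i j. (p ! i, p ! j) \<in> A) ?ns"
      using p(1) arc back_arc a k n
      by (auto simp: successively_Cons successively_append_iff is_path_def numeral_2_eq_2
          intro!: successively_upt)
  qed (use a k n in auto)
  then have "adjacent A (hd (map ((!) p) ?ns)) (last (map ((!) p) ?ns))"
    by (rule k_quasi_transitiveD[OF kqt]) (use k in simp)
  then have "adjacent A (p ! n) (p ! (a - 2))" by simp
  then show ?thesis
    using forward_chordlessD[OF p(2), of "a - 2" n] a n by (auto simp: adjacent_def)
qed

lemma kqt_chordless_last_arc_parity:
  assumes kqt: "k_quasi_transitive k V A" and p: "is_path V A p" "forward_chordless A p"
    and k: "2 \<le> k" and long: "k < length p"
  shows "(last p, p ! ((length p - 1 - k) mod 2)) \<in> A"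
proof -
  define n where "n = length p - 1"
  have n: "length p = Suc n" "last p = p ! n"
    using p(1) unfolding n_def by (auto simp: is_path_def last_conv_nth)
  have "(last p, p ! (n - k - 2 * d)) \<in> A" if "2 * d \<le> n - k" for d
    using that
  proof (induction d)
    case 0
    show ?case using kqt_chordless_back_arc[OF kqt p k, of "n - k"] long n by simp
  next
    case (Suc d)
    then have "(last p, p ! (n - k - 2 * d - 2)) \<in> A"
      using kqt_chordless_last_arc_step[OF kqt p k, of "n - k - 2 * d"] n by simp
    then show ?case by (simp add: diff_diff_add)
  qed
  from this[of "(n - k) div 2"] show ?thesis
    unfolding n_def by (simp add: minus_mult_div_eq_mod)
qed

definition shortest_path_from_set ::
  "'a set \<Rightarrow> ('a \<times> 'a) set \<Rightarrow> 'a set \<Rightarrow> 'a \<Rightarrow> 'a list \<Rightarrow> bool" where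
  "shortest_path_from_set V A S x z \<longleftrightarrow>
     is_path V A z \<and> hd z \<in> S \<and> last z = x \<and>
     (\<forall>z'. is_path V A z' \<and> hd z' \<in> S \<and> last z' = x \<longrightarrow> length z \<le> length z')"

lemma shortest_path_from_set_exists:
  assumes "strong V A" "s \<in> S" "S \<subseteq> V" "x \<in> V"
  obtains z where "shortest_path_from_set V A S x z"
proof -
  obtain z0 where "is_path V A z0" "hd z0 = s" "last z0 = x"
    using assms unfolding strong_def by blast
  then show ?thesis
    using ex_has_least_nat[of "\<lambda>z. is_path V A z \<and> hd z \<in> S \<and> last z = x" z0 length]
      that assms(2) unfolding shortest_path_from_set_def by blast
qed

lemma shortest_path_from_set_forward_chordless:
  "shortest_path_from_set V A S x z \<Longrightarrow> forward_chordless A z"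
  unfolding shortest_path_from_set_def by (metis forward_chordless_if_shortest)

lemma shortest_path_from_set_tl_disjoint:
  assumes z: "shortest_path_from_set V A S x z"
  shows "set (tl z) \<inter> S = {}"
proof (rule ccontr)
  assume "set (tl z) \<inter> S \<noteq> {}"
  then obtain i where i: "Suc i < length z" "z ! Suc i \<in> S"
    by (auto simp: in_set_conv_nth nth_tl less_diff_conv)
  have "is_path V A (drop (Suc i) z)" "hd (drop (Suc i) z) \<in> S" "last (drop (Suc i) z) = x"
    using z i by (auto simp: shortest_path_from_set_def is_path_drop hd_drop_conv_nth)
  then have "length z \<le> length (drop (Suc i) z)"
    using z unfolding shortest_path_from_set_def by blast
  then show False using i by simp
qed

lemma shortest_path_from_set_no_arc_into:
  assumes z: "shortest_path_from_set V A S x z" and S: "S \<subseteq> V" "s \<in> S"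
    and i: "2 \<le> i" "i < length z"
  shows "(s, z ! i) \<notin> A"
proof
  assume arc: "(s, z ! i) \<in> A"
  have "set (drop i z) \<subseteq> set (tl z)"
    using i by (cases i) (simp_all add: drop_Suc set_drop_subset)
  then have "s \<notin> set (drop i z)"
    using shortest_path_from_set_tl_disjoint[OF z] S by blast
  then have "is_path V A (s # drop i z)" "hd (s # drop i z) \<in> S" "last (s # drop i z) = x"
    using z S i arc
    by (auto simp: shortest_path_from_set_def is_path_Cons is_path_drop hd_drop_conv_nth)
  then have "length z \<le> length (s # drop i z)"
    using z unfolding shortest_path_from_set_def by blast
  then show False using i by simp
qed

locale semicomplete_chordless_path =
  fixes V :: "'a set" and A :: "('a \<times> 'a) set" and k :: nat and P :: "'a list"
  assumes kqt: "k_quasi_transitive k V A"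
    and strong: "strong V A"
    and k_ge_4: "4 \<le> k"
    and path_P: "is_path V A P"
    and length_P: "length P = k + 3"
    and chordless_P: "forward_chordless A P"
    and semicomplete_P: "semicomplete_on A (set P)"
begin

lemma back_arc_P:
  assumes "i + 2 \<le> j" "j < k + 3"
  shows "(P ! j, P ! i) \<in> A"
proof -
  have "P ! i \<noteq> P ! j"
    using assms path_P length_P by (simp add: is_path_def nth_eq_iff_index_eq)
  then have "adjacent A (P ! i) (P ! j)"
    using assms semicomplete_P length_P by (simp add: semicomplete_on_def)
  then show ?thesis
    using forward_chordlessD[OF chordless_P] assms length_P by (auto simp: adjacent_def)
qed

lemma path_along_P:
  assumes "ns \<noteq> []" "distinct ns" "\<forall>n\<in>set ns. n < k + 3"
    and "successively (\<lambda>i j. j = Suc i \<or> j + 2 \<le> i) ns"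
  shows "is_path V A (map ((!) P) ns)"
proof (rule is_path_map_nth[OF path_P])
  show "successively (\<lambda>i j. (P ! i, P ! j) \<in> A) ns"
    using assms(4)
  proof (rule successively_mono)
    fix i j assume "i \<in> set ns" "j \<in> set ns" "j = Suc i \<or> j + 2 \<le> i"
    then show "(P ! i, P ! j) \<in> A"
      using assms(3) path_P length_P back_arc_P by (auto simp: is_path_def)
  qed
qed (use assms length_P in auto)

lemma path_in_P_ending_at:
  assumes "i < k + 3" "0 < a" "a \<le> k + 3"
  obtains q where "is_path V A q" "length q = a" "last q = P ! i" "set q \<subseteq> set P"
proof -
  define ns where "ns = (if a \<le> Suc i then [Suc i - a..<Suc i]
    else [k + 3 - (a - Suc i)..<k + 3] @ [0..<Suc i])"
  have "is_path V A (map ((!) P) ns)"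
    using assms unfolding ns_def
    by (intro path_along_P)
      (auto simp: successively_append_iff simp del: upt_Suc intro: successively_upt)
  moreover have "length (map ((!) P) ns) = a" "last (map ((!) P) ns) = P ! i"
    using assms unfolding ns_def by (auto simp: last_map simp del: upt_Suc)
  moreover have "set (map ((!) P) ns) \<subseteq> set P"
    using assms length_P unfolding ns_def by auto
  ultimately show ?thesis by (rule that)
qed

lemma path_in_P_starting_at:
  assumes "i < k + 3" "0 < a" "a \<le> k + 3"
  obtains q where "is_path V A q" "length q = a" "hd q = P ! i" "set q \<subseteq> set P"
proof -
  define ns where "ns = (if i + a \<le> k + 3 then [i..<i + a]
    else [i..<k + 3] @ [0..<a - (k + 3 - i)])"
  have "is_path V A (map ((!) P) ns)"
    using assms unfolding ns_def
    by (intro path_along_P)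
      (auto simp: successively_append_iff simp del: upt_Suc intro: successively_upt)
  moreover have "length (map ((!) P) ns) = a" "hd (map ((!) P) ns) = P ! i"
    using assms unfolding ns_def by (auto simp: hd_map)
  moreover have "set (map ((!) P) ns) \<subseteq> set P"
    using assms length_P unfolding ns_def by auto
  ultimately show ?thesis by (rule that)
qed

lemma path_in_P_to_predecessor:
  assumes "0 < j" "j < k + 3"
  obtains q where "is_path V A q" "length q = k" "hd q = P ! j" "last q = P ! (j - 1)"
    "set q \<subseteq> set P"
proof -
  \<comment> \<open>The jump back from \<open>P ! (s + k - 1)\<close> to \<open>P ! s\<close> must stay inside \<open>P\<close>,
    hence \<open>s \<le> 3\<close>.\<close>
  define s where "s = min 3 (j - 1)"
  define ns where "ns = [j..<s + k] @ [s..<j]"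
  have s: "s < j" "j < s + k" "s + k \<le> k + 3"
    using assms k_ge_4 unfolding s_def by auto
  have "is_path V A (map ((!) P) ns)"
    using s k_ge_4 unfolding ns_def
    by (intro path_along_P)
      (auto simp: successively_append_iff simp del: upt_Suc intro: successively_upt)
  moreover have "length (map ((!) P) ns) = k"
    "hd (map ((!) P) ns) = P ! j" "last (map ((!) P) ns) = P ! (j - 1)"
    using s unfolding ns_def by (auto simp: hd_map last_map simp del: upt_Suc)
  moreover have "set (map ((!) P) ns) \<subseteq> set P"
    using s length_P unfolding ns_def by auto
  ultimately show ?thesis by (rule that)
qed

lemma arc_from_third_vertex_into_P:
  assumes z: "shortest_path_from_set V A (set P) y z" and long: "3 \<le> length z"
  shows "\<exists>w\<in>set P. (z ! 2, w) \<in> A"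
proof -
  obtain z0 z1 z2 r where z012: "z = z0 # z1 # z2 # r"
    using long by (auto simp: Suc_le_length_iff numeral_eq_Suc)
  have z_path: "is_path V A (z0 # z1 # z2 # r)" and "z0 \<in> set P"
    using z z012 by (auto simp: shortest_path_from_set_def)
  then have "is_path V A (z0 # [z1, z2])"
    using is_path_take[OF z_path, of 3] by (simp add: numeral_3_eq_3)
  then have "is_path V A [z1, z2]" "(z0, z1) \<in> A"
    by (simp_all add: is_path_Cons)
  have "{z1, z2} \<inter> set P = {}"
    using shortest_path_from_set_tl_disjoint[OF z] z012 by auto
  obtain i0 where i0: "i0 < k + 3" "P ! i0 = z0"
    using \<open>z0 \<in> set P\<close> length_P by (metis in_set_conv_nth)
  have "0 < k - 1" "k - 1 \<le> k + 3" using k_ge_4 by auto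
  then obtain q where q: "is_path V A q" "length q = k - 1" "last q = P ! i0"
    "set q \<subseteq> set P"
    by (rule path_in_P_ending_at[OF i0(1)])
  have "q \<noteq> []" using q(2) k_ge_4 by auto
  then have "is_path V A (q @ [z1, z2])"
    using q i0(2) \<open>is_path V A [z1, z2]\<close> \<open>{z1, z2} \<inter> set P = {}\<close> \<open>(z0, z1) \<in> A\<close>
    by (auto simp: is_path_append)
  then have "adjacent A (hd (q @ [z1, z2])) (last (q @ [z1, z2]))"
    by (rule k_quasi_transitiveD[OF kqt]) (use q(2) k_ge_4 in simp)
  moreover have "hd q \<in> set P" using \<open>q \<noteq> []\<close> q(4) by auto
  moreover have "(hd q, z2) \<notin> A"
    using shortest_path_from_set_no_arc_into[OF z _ \<open>hd q \<in> set P\<close>, of 2] path_P z012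
    by (simp add: is_path_def)
  ultimately show ?thesis using \<open>q \<noteq> []\<close> z012 by (auto simp: adjacent_def)
qed

context
  fixes x :: 'a
  assumes x: "x \<in> V" "x \<notin> set P"
    and no_in_arc: "\<forall>w\<in>set P. (w, x) \<notin> A"
begin

lemma out_arc_along_path:
  assumes q: "is_path V A q" "length q = k" "set q \<subseteq> set P" and arc: "(x, hd q) \<in> A"
  shows "(x, last q) \<in> A"
proof (rule kqt_arc_to_end_of_path[OF kqt _ q(2)])
  have "q \<noteq> []" using q(2) k_ge_4 by auto
  then show "is_path V A (x # q)"
    using q x arc by (auto simp: is_path_Cons)
  show "(last q, x) \<notin> A"
    using \<open>q \<noteq> []\<close> q(3) no_in_arc last_in_set by blast
qed (use k_ge_4 in simp)

lemma out_arc_pred: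
  assumes "(x, P ! Suc j) \<in> A" "Suc j < k + 3"
  shows "(x, P ! j) \<in> A"
proof -
  obtain q where "is_path V A q" "length q = k" "hd q = P ! Suc j" "last q = P ! j"
    "set q \<subseteq> set P"
    using path_in_P_to_predecessor[of "Suc j"] assms(2) by auto
  then show ?thesis using out_arc_along_path assms(1) by metis
qed

lemma out_arc_down:
  assumes "(x, P ! j) \<in> A" "j < k + 3" "i \<le> j"
  shows "(x, P ! i) \<in> A"
  using assms
proof (induction j)
  case (Suc j)
  then show ?case using out_arc_pred by (cases "i = Suc j") auto
qed simp

lemma out_arc_forward:
  assumes "(x, P ! j) \<in> A" "j \<le> 3"
  shows "(x, P ! (j + k - 1)) \<in> A"
proof -
  have "is_path V A (map ((!) P) [j..<j + k])"
    using assms k_ge_4 length_P by (intro is_path_slice[OF path_P]) auto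
  moreover have "set (map ((!) P) [j..<j + k]) \<subseteq> set P"
    using assms length_P by (auto intro: nth_mem)
  ultimately show ?thesis
    using out_arc_along_path[of "map ((!) P) [j..<j + k]"] assms k_ge_4 length_P
    by (auto simp: hd_map last_map simp del: upt_Suc)
qed

lemma out_arc_all:
  assumes "(x, P ! j) \<in> A" "j < k + 3" "i < k + 3"
  shows "(x, P ! i) \<in> A"
proof -
  have "(x, P ! (k - 1)) \<in> A"
    using out_arc_forward[of 0] out_arc_down[of j 0] assms by simp
  then have "(x, P ! (k + 2)) \<in> A"
    using out_arc_forward[of 3] out_arc_down[of "k - 1" 3] k_ge_4 by simp
  then show ?thesis using out_arc_down[of "k + 2" i] assms by simp
qed

lemma out_arc_if_close:
  assumes z: "shortest_path_from_set V A (set P) x z" and close: "length z \<le> k + 1"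
  shows "\<exists>w\<in>set P. (x, w) \<in> A"
proof -
  obtain z0 z' where z0: "z = z0 # z'"
    using z by (cases z) (auto simp: shortest_path_from_set_def is_path_def)
  have "z0 \<in> set P" "last z = x" using z z0 by (auto simp: shortest_path_from_set_def)
  then have "z' \<noteq> []" using x z0 by auto
  then have z': "is_path V A z'" "(z0, hd z') \<in> A" "set z' \<inter> set P = {}" "last z' = x"
    using z z0 shortest_path_from_set_tl_disjoint[OF z]
    by (auto simp: shortest_path_from_set_def is_path_Cons)
  obtain i0 where i0: "i0 < k + 3" "P ! i0 = z0"
    using \<open>z0 \<in> set P\<close> length_P by (metis in_set_conv_nth)
  have "0 < k + 1 - length z'" "k + 1 - length z' \<le> k + 3" using close z0 by auto
  then obtain q where q: "is_path V A q" "length q = k + 1 - length z'" "last q = P ! i0"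
    "set q \<subseteq> set P"
    by (rule path_in_P_ending_at[OF i0(1)])
  have "q \<noteq> []" using q(2) close z0 by auto
  then have "is_path V A (q @ z')"
    using q z' \<open>z' \<noteq> []\<close> i0(2) by (auto simp: is_path_append)
  then have "adjacent A (hd (q @ z')) (last (q @ z'))"
    by (rule k_quasi_transitiveD[OF kqt]) (use q(2) close z0 in simp)
  moreover have "hd q \<in> set P" using \<open>q \<noteq> []\<close> q(4) by auto
  ultimately show ?thesis
    using \<open>q \<noteq> []\<close> \<open>z' \<noteq> []\<close> z'(4) no_in_arc by (auto simp: adjacent_def)
qed

lemma out_arc_if_second_vertex:
  assumes z: "shortest_path_from_set V A (set P) x z" and long: "4 \<le> length z"
    and arc: "(x, z ! 1) \<in> A"
  shows "\<exists>w\<in>set P. (x, w) \<in> A"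
proof -
  obtain z0 z1 z2 r where z012: "z = z0 # z1 # z2 # r" and "r \<noteq> []"
    using long by (auto simp: Suc_le_length_iff numeral_eq_Suc)
  have z_path: "is_path V A (z0 # z1 # z2 # r)" and "last r = x"
    using z z012 \<open>r \<noteq> []\<close> by (auto simp: shortest_path_from_set_def)
  then have "x \<notin> {z1, z2}"
    using \<open>r \<noteq> []\<close> by (auto simp: is_path_def)
  have "is_path V A [z1, z2]"
    using is_path_take[OF z_path, of 3] is_path_Cons[of "[z1, z2]" V A z0]
    by (simp add: numeral_3_eq_3)
  have "{z1, z2} \<inter> set P = {}"
    using shortest_path_from_set_tl_disjoint[OF z] z012 by auto
  obtain w where "w \<in> set P" "(z2, w) \<in> A"
    using arc_from_third_vertex_into_P[OF z] long z012 by auto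
  then obtain h where h: "h < k + 3" "(z2, P ! h) \<in> A"
    using length_P by (metis in_set_conv_nth)
  have "0 < k - 2" "k - 2 \<le> k + 3" using k_ge_4 by auto
  then obtain q where q: "is_path V A q" "length q = k - 2" "hd q = P ! h" "set q \<subseteq> set P"
    by (rule path_in_P_starting_at[OF h(1)])
  have "q \<noteq> []" using q(2) k_ge_4 by auto
  then have "is_path V A (x # [z1, z2] @ q)"
    using q h x arc z012 \<open>is_path V A [z1, z2]\<close> \<open>x \<notin> {z1, z2}\<close>
      \<open>{z1, z2} \<inter> set P = {}\<close>
    by (auto simp: is_path_append is_path_Cons)
  then have "(x, last ([z1, z2] @ q)) \<in> A"
    using \<open>q \<noteq> []\<close> q(2,4) k_ge_4 no_in_arc last_in_set
    by (intro kqt_arc_to_end_of_path[OF kqt]) auto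
  then show ?thesis using \<open>q \<noteq> []\<close> q(4) last_in_set by fastforce
qed

lemma out_arc_exists: "\<exists>w\<in>set P. (x, w) \<in> A"
proof -
  have "P ! 0 \<in> set P" "set P \<subseteq> V" using path_P length_P by (auto simp: is_path_def)
  then obtain z where z: "shortest_path_from_set V A (set P) x z"
    using shortest_path_from_set_exists[OF strong _ _ x(1)] by blast
  show ?thesis
  proof (cases "length z \<le> k + 1")
    case True
    then show ?thesis by (rule out_arc_if_close[OF z])
  next
    case False
    have z_path: "is_path V A z" "hd z \<in> set P" "last z = x"
      using z by (auto simp: shortest_path_from_set_def)
    have "(x, z ! ((length z - 1 - k) mod 2)) \<in> A"
      using kqt_chordless_last_arc_parity[OF kqt z_path(1)]
        shortest_path_from_set_forward_chordless[OF z] k_ge_4 False z_path(3) by simp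
    then consider "(x, z ! 0) \<in> A" | "(x, z ! 1) \<in> A"
      by (auto simp: mod2_eq_if split: if_splits)
    then show ?thesis
    proof cases
      case 1
      then show ?thesis using z_path by (auto simp: is_path_def hd_conv_nth)
    next
      case 2
      then show ?thesis using out_arc_if_second_vertex[OF z] False k_ge_4 by simp
    qed
  qed
qed

lemma dominates_P: "dominates A {x} (set P)"
proof -
  obtain j where "j < k + 3" "(x, P ! j) \<in> A"
    using out_arc_exists length_P by (metis in_set_conv_nth)
  then show ?thesis
    using out_arc_all length_P by (auto simp: dominates_def in_set_conv_nth)
qed

end

lemma converse_rev: "semicomplete_chordless_path V (converse A) k (rev P)"
  using kqt strong k_ge_4 path_P length_P chordless_P semicomplete_P
  by unfold_locales
    (simp_all add: k_quasi_transitive_converse strong_converse forward_chordless_converse_rev)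

end

theorem lemma2p12:
  fixes V :: "'a set" and A :: "('a \<times> 'a) set" and k :: nat and u v :: 'a and P :: "'a list"
  assumes "digraph V A"
    and "odd k" and "k \<ge> 5"
    and "strong V A" and "k_quasi_transitive k V A"
    and "diam V A \<ge> k + 2"
    and "u \<in> V" and "v \<in> V" and "dist V A u v = k + 2"
    and "is_path V A P" and "hd P = u" and "last P = v" and "length P = dist V A u v + 1"
    and "semicomplete_on A (set P)"
  shows "(\<forall>x \<in> {x \<in> V - set P. no_back_arcs A {x} (set P)}. strictly_dominates A {x} (set P)) \<and>
         (\<forall>y \<in> {y \<in> V - set P. no_back_arcs A (set P) {y}}. strictly_dominates A (set P) {y})"
proof -
  have "forward_chordless A P"
    using forward_chordless_if_geodesic[OF assms(10)] assms(11-13) by simp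
  then interpret semicomplete_chordless_path V A k P
    using assms by unfold_locales auto
  interpret rev: semicomplete_chordless_path V "converse A" k "rev P"
    by (rule converse_rev)
  show ?thesis
  proof (intro conjI ballI)
    fix x assume "x \<in> {x \<in> V - set P. no_back_arcs A {x} (set P)}"
    then show "strictly_dominates A {x} (set P)"
      using dominates_P by (auto simp: strictly_dominates_def no_back_arcs_def)
  next
    fix y assume "y \<in> {y \<in> V - set P. no_back_arcs A (set P) {y}}"
    then show "strictly_dominates A (set P) {y}"
      using rev.dominates_P by (auto simp: strictly_dominates_def dominates_def no_back_arcs_def)
  qed
qed

end
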